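(* Let $r\ge 2$, $s$, $t$ be integers with $r+2 \le s \le t-r+1$. Then \[ P_2(\mathcal{C}(s,r)) \le \Big(1 - \frac{1}{rs^2}\Big)\, P_2(\mathcal{L}(s,r,t)). \]
   Context: For a hypergraph $H$, $P_2(H)=\sum_x d(x)^2$ with $d(x)$ the number of edges containing $x$. The colex order on $r$-subsets of $\mathbb{N}$ is $A<B$ iff $\sum_{i\in A}2^i<\sum_{i\in B}2^i$, and $\mathcal{C}(s,r)$ is the family of the first $s$ $r$-subsets of $\mathbb{N}$ in colex order. The lex order on $[t]^{(r)}$ (the $r$-subsets of $\{1,\dots,t\}$) is $A<B$ iff $\min(A\triangle B)\in A$, and $\mathcal{L}(s,r,t)$ is the $r$-graph on $[t]$ consisting of the first $s$ sets of $[t]^{(r)}$ in lex order. *)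

theory Defs
  imports Complex_Main
begin

definition degree :: "'a set set \<Rightarrow> 'a \<Rightarrow> nat" where
  "degree H x = card {e \<in> H. x \<in> e}"

definition P2 :: "'a set set \<Rightarrow> nat" where
  "P2 H = (\<Sum>x\<in>\<Union>H. (degree H x)^2)"

definition colex_val :: "nat set \<Rightarrow> nat" where
  "colex_val A = (\<Sum>i\<in>A. 2^i)"

definition colex_less :: "nat set \<Rightarrow> nat set \<Rightarrow> bool" where
  "colex_less A B \<longleftrightarrow> colex_val A < colex_val B"

text \<open>C(s,r): the first s r-subsets of nat in colex order, i.e. those r-sets
  having fewer than s r-sets strictly before them.\<close>
definition colex_family :: "nat \<Rightarrow> nat \<Rightarrow> nat set set" where
  "colex_family s r = {A. finite A \<and> card A = r \<and>
     card {B. finite B \<and> card B = r \<and> colex_less B A} < s}"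

definition lex_less :: "nat set \<Rightarrow> nat set \<Rightarrow> bool" where
  "lex_less A B \<longleftrightarrow> A \<noteq> B \<and> Min (A - B \<union> (B - A)) \<in> A"

definition lex_family :: "nat \<Rightarrow> nat \<Rightarrow> nat \<Rightarrow> nat set set" where
  "lex_family s r t = {A. A \<subseteq> {1..t} \<and> card A = r \<and>
     card {B. B \<subseteq> {1..t} \<and> card B = r \<and> lex_less B A} < s}"

end

theory Submission
  imports Defs "HOL-Library.Nat_Bijection"
begin

text \<open>Counting incidences in pairs, \<open>P2 H = (\<Sum>A\<in>H. \<Sum>B\<in>H. card (A \<inter> B))\<close>. In an
  \<open>r\<close>-uniform family of at most \<open>s\<close> sets every diagonal term is \<open>r\<close> and every other term at most
  \<open>r - 1\<close>; moreover the first \<open>r + 2\<close> sets in colex order include \<open>{1..r}\<close> and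
  \<open>{0..r-2} \<union> {r+1}\<close>, which share only \<open>r - 2\<close> elements. Hence
  \<open>P2 (C(s,r)) \<le> s\<^sup>2 (r - 1) + s - 2\<close>. On the other hand \<open>L(s,r,t)\<close> contains the sunflower
  \<open>{1..r-1} \<union> {j}\<close>, \<open>r \<le> j < r + s\<close>, whose \<open>P2\<close> is exactly \<open>s\<^sup>2 (r - 1) + s\<close>. The loss of
  \<open>2\<close> beats the factor \<open>1 - 1/(r s\<^sup>2)\<close> because \<open>s\<^sup>2 (r - 1) + s \<le> 2 r s\<^sup>2\<close>.\<close>

lemma inj_on_card_strict_below:
  fixes v :: "'a \<Rightarrow> 'b::linorder"
  assumes "inj_on v U" and "\<And>A. A \<in> U \<Longrightarrow> finite {B \<in> U. v B < v A}"
  shows "inj_on (\<lambda>A. card {B \<in> U. v B < v A}) U"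
proof -
  have less: "card {B \<in> U. v B < v A} < card {B \<in> U. v B < v A'}"
    if "A \<in> U" "A' \<in> U" "v A < v A'" for A A'
    using that assms(2) by (intro psubset_card_mono) auto
  show ?thesis
  proof (rule inj_onI, rule ccontr)
    fix A A' assume A: "A \<in> U" "A' \<in> U" "A \<noteq> A'"
      and card_eq: "card {B \<in> U. v B < v A} = card {B \<in> U. v B < v A'}"
    from A have "v A \<noteq> v A'" using assms(1) by (auto dest: inj_onD)
    then consider "v A < v A'" | "v A' < v A" by (rule linorder_neqE)
    then show False using less[of A A'] less[of A' A] A card_eq by cases simp_all
  qed
qed

lemma initial_segment_finite_card_le:
  fixes v :: "'a \<Rightarrow> 'b::linorder" and s :: nat
  assumes "inj_on v U" and "\<And>A. A \<in> U \<Longrightarrow> finite {B \<in> U. v B < v A}"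
  defines "S \<equiv> {A \<in> U. card {B \<in> U. v B < v A} < s}"
  shows "finite S" and "card S \<le> s"
proof -
  have inj: "inj_on (\<lambda>A. card {B \<in> U. v B < v A}) S"
    using inj_on_card_strict_below[OF assms(1,2)] unfolding S_def by (rule inj_on_subset) auto
  have into: "(\<lambda>A. card {B \<in> U. v B < v A}) ` S \<subseteq> {..<s}"
    unfolding S_def by auto
  show "finite S" using finite_imageD[OF finite_subset[OF into] inj] by simp
  show "card S \<le> s" using card_inj_on_le[OF inj into] by simp
qed

lemma P2_eq_sum_card_Int:
  assumes "finite H" and "\<And>A. A \<in> H \<Longrightarrow> finite A"
  shows "P2 H = (\<Sum>A\<in>H. \<Sum>B\<in>H. card (A \<inter> B))"
proof -
  have "degree H x = (\<Sum>A\<in>H. of_bool (x \<in> A))" for x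
    unfolding degree_def using assms(1) by (simp add: Int_def conj_commute)
  then have "(degree H x)\<^sup>2 = (\<Sum>A\<in>H. \<Sum>B\<in>H. of_bool (x \<in> A \<inter> B))" for x
    by (simp add: power2_eq_square sum_product of_bool_conj)
  then have "P2 H = (\<Sum>A\<in>H. \<Sum>B\<in>H. \<Sum>x\<in>\<Union>H. of_bool (x \<in> A \<inter> B))"
    unfolding P2_def by (simp add: sum.swap[of _ "\<Union>H"])
  also have "\<dots> = (\<Sum>A\<in>H. \<Sum>B\<in>H. card (A \<inter> B))"
    using assms by (intro sum.cong refl) (auto intro: arg_cong[where f = card])
  finally show ?thesis .
qed

lemma P2_mono:
  assumes "H \<subseteq> H'" and "finite H'" and "\<And>A. A \<in> H' \<Longrightarrow> finite A"
  shows "P2 H \<le> P2 H'"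
proof -
  have "finite H" using assms(1,2) by (rule finite_subset)
  then have "P2 H = (\<Sum>A\<in>H. \<Sum>B\<in>H. card (A \<inter> B))"
    using assms(1,3) by (intro P2_eq_sum_card_Int) auto
  also have "\<dots> \<le> (\<Sum>A\<in>H. \<Sum>B\<in>H'. card (A \<inter> B))"
    using assms(1,2) by (intro sum_mono sum_mono2) auto
  also have "\<dots> \<le> (\<Sum>A\<in>H'. \<Sum>B\<in>H'. card (A \<inter> B))"
    using assms(1,2) by (intro sum_mono2) auto
  also have "\<dots> = P2 H'"
    using assms(2,3) by (rule P2_eq_sum_card_Int[symmetric])
  finally show ?thesis .
qed

lemma sum_sum_const_plus_diagonal:
  fixes c :: nat
  assumes "finite S"
  shows "(\<Sum>x\<in>S. \<Sum>y\<in>S. c + of_bool (x = y)) = (card S)\<^sup>2 * c + card S"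
  using assms by (simp add: sum.distrib power2_eq_square)

lemma P2_sunflower:
  assumes "finite K" and "finite I" and "I \<inter> K = {}"
  shows "P2 ((\<lambda>i. insert i K) ` I) = (card I)\<^sup>2 * card K + card I"
proof -
  have inj: "inj_on (\<lambda>i. insert i K) I"
    using assms(3) by (intro inj_onI) blast
  have petals: "card (insert i K \<inter> insert j K) = card K + of_bool (i = j)" if "i \<in> I" "j \<in> I" for i j
  proof (cases "i = j")
    case False
    then have "insert i K \<inter> insert j K = K" using that assms(3) by auto
    then show ?thesis using False by simp
  next
    case True
    have "j \<notin> K" using that(2) assms(3) by blast
    then show ?thesis using True assms(1) by simp
  qed
  have "P2 ((\<lambda>i. insert i K) ` I) = (\<Sum>i\<in>I. \<Sum>j\<in>I. card (insert i K \<inter> insert j K))"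
    using assms(1,2) by (subst P2_eq_sum_card_Int) (auto simp: sum.reindex[OF inj])
  also have "\<dots> = (card I)\<^sup>2 * card K + card I"
    using petals assms(2) by (simp add: sum_sum_const_plus_diagonal cong: sum.cong)
  finally show ?thesis .
qed

lemma sum_add_two_le_if_two_strict:
  fixes f g :: "'a \<Rightarrow> nat"
  assumes "finite S" and le: "\<And>x. x \<in> S \<Longrightarrow> f x \<le> g x"
    and "a \<in> S" "b \<in> S" "a \<noteq> b" and "f a < g a" "f b < g b"
  shows "sum f S + 2 \<le> sum g S"
proof -
  have ab: "{a, b} \<subseteq> S" using assms(3,4) by simp
  have "sum f {a, b} + 2 \<le> sum g {a, b}" using assms(5-7) by simp
  moreover have "sum f (S - {a, b}) \<le> sum g (S - {a, b})" using le by (intro sum_mono) auto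
  ultimately show ?thesis using sum.subset_diff[OF ab assms(1), of f] sum.subset_diff[OF ab assms(1), of g]
    by linarith
qed

lemma card_Int_less_if_uniform:
  assumes "finite A" "finite B" "card A = r" "card B = r" "A \<noteq> B"
  shows "card (A \<inter> B) < r"
proof -
  have "A \<inter> B \<noteq> A" using assms card_subset_eq[of B A] by (metis Int_absorb2 inf.absorb_iff1)
  then show ?thesis using assms psubset_card_mono[of A "A \<inter> B"] by auto
qed

lemma P2_uniform_le:
  assumes "finite H" and uniform: "\<And>A. A \<in> H \<Longrightarrow> finite A \<and> card A = r"
    and "A\<^sub>0 \<in> H" "C\<^sub>0 \<in> H" "A\<^sub>0 \<noteq> C\<^sub>0" and small: "card (A\<^sub>0 \<inter> C\<^sub>0) + 2 \<le> r"
  shows "P2 H + 2 \<le> (card H)\<^sup>2 * (r - 1) + card H"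
proof -
  define g :: "'a set \<times> 'a set \<Rightarrow> nat" where "g = (\<lambda>(A, B). r - 1 + of_bool (A = B))"
  have le: "card (A \<inter> B) \<le> g (A, B)" if "A \<in> H" "B \<in> H" for A B
    using card_Int_less_if_uniform[of A B r] uniform[OF that(1)] uniform[OF that(2)] small
    unfolding g_def by (cases "A = B") auto
  have "P2 H + 2 = (\<Sum>(A, B)\<in>H \<times> H. card (A \<inter> B)) + 2"
    using assms(1) uniform by (simp add: P2_eq_sum_card_Int sum.cartesian_product)
  also have "\<dots> \<le> sum g (H \<times> H)"
    using assms(1,3-5) small le unfolding g_def
    by (intro sum_add_two_le_if_two_strict[where a = "(A\<^sub>0, C\<^sub>0)" and b = "(C\<^sub>0, A\<^sub>0)"])
      (auto simp: Int_commute)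
  also have "\<dots> = (card H)\<^sup>2 * (r - 1) + card H"
    using assms(1) unfolding g_def
    by (simp add: sum.cartesian_product[symmetric] sum_sum_const_plus_diagonal)
  finally show ?thesis .
qed

lemma colex_val_eq_set_encode: "colex_val = set_encode"
  unfolding colex_val_def[abs_def] set_encode_def by simp

lemma inj_on_colex_val: "inj_on colex_val (Collect finite)"
  by (simp add: colex_val_eq_set_encode inj_on_set_encode)

lemma colex_val_insert: "finite A \<Longrightarrow> n \<notin> A \<Longrightarrow> colex_val (insert n A) = 2 ^ n + colex_val A"
  by (simp add: colex_val_eq_set_encode)

lemma colex_val_lessThan: "colex_val {..<n} + 1 = 2 ^ n"
  unfolding colex_val_def by (induction n) auto

lemma colex_val_less_if_subset_lessThan: "A \<subseteq> {..<n} \<Longrightarrow> colex_val A < 2 ^ n"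
proof -
  assume "A \<subseteq> {..<n}"
  then have "colex_val A \<le> colex_val {..<n}"
    unfolding colex_val_def by (intro sum_mono2) auto
  then show ?thesis using colex_val_lessThan[of n] by linarith
qed

lemma subset_lessThan_if_colex_val_less:
  assumes "finite A" and "colex_val A < 2 ^ n"
  shows "A \<subseteq> {..<n}"
proof
  fix i assume "i \<in> A"
  then have "(2::nat) ^ i \<le> colex_val A"
    unfolding colex_val_def using assms(1) by (intro member_le_sum) auto
  then have "(2::nat) ^ i < 2 ^ n" using assms(2) by linarith
  then show "i \<in> {..<n}" by simp
qed

lemma two_power_card_le_colex_val: "finite A \<Longrightarrow> 2 ^ card A \<le> colex_val A + 1"
proof (induction "card A" arbitrary: A)
  case 0
  then show ?case by simp
next
  case (Suc k)
  define m where "m = Max A"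
  have "A \<noteq> {}" using Suc.hyps(2) by auto
  then have m: "m \<in> A" "A \<subseteq> {..m}" using Suc.prems m_def by auto
  then have "Suc k \<le> Suc m" using Suc.hyps(2) card_mono[of "{..m}" A] by simp
  then have "(2::nat) ^ k \<le> 2 ^ m" by (simp add: power_increasing)
  moreover have "2 ^ k \<le> colex_val (A - {m}) + 1"
    using Suc.hyps Suc.prems m by (metis card_Diff_singleton diff_Suc_1 finite_Diff)
  moreover have "colex_val A = 2 ^ m + colex_val (A - {m})"
    using colex_val_insert[of "A - {m}" m] Suc.prems m by (simp add: insert_absorb)
  moreover have "(2::nat) ^ card A = 2 ^ k + 2 ^ k" using Suc.hyps(2)[symmetric] by simp
  ultimately show ?case by linarith
qed

lemma colex_family_eq:
  "colex_family s r = {A \<in> {A. finite A \<and> card A = r}.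
     card {B \<in> {A. finite A \<and> card A = r}. colex_val B < colex_val A} < s}"
  unfolding colex_family_def colex_less_def by simp

lemma finite_colex_family: "finite (colex_family s r)"
  and card_colex_family_le: "card (colex_family s r) \<le> s"
proof -
  have inj: "inj_on colex_val {A. finite A \<and> card A = r}"
    using inj_on_colex_val by (rule inj_on_subset) auto
  have "B \<subseteq> {..<colex_val A}" if "finite B" "colex_val B < colex_val A" for A B
    using subset_lessThan_if_colex_val_less[OF that(1), of "colex_val A"] that(2) less_exp[of "colex_val A"]
    by linarith
  then have "{B \<in> {A. finite A \<and> card A = r}. colex_val B < colex_val A} \<subseteq> Pow {..<colex_val A}" for A
    by blast
  then have "finite {B \<in> {A. finite A \<and> card A = r}. colex_val B < colex_val A}" for A
    by (rule finite_subset) simp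
  then show "finite (colex_family s r)" "card (colex_family s r) \<le> s"
    unfolding colex_family_eq using initial_segment_finite_card_le[OF inj] by blast+
qed

lemma subset_atMost_if_colex_val_less_insert:
  assumes "finite B" and "card B = r"
    and less: "colex_val B < colex_val (insert (r + 1) {..<r - 1})"
  shows "B \<subseteq> {..r}"
proof -
  have "colex_val (insert (r + 1) {..<r - 1}) < 2 ^ (r + 2)"
    by (rule colex_val_less_if_subset_lessThan) auto
  then have "B \<subseteq> {..<r + 2}"
    using less assms(1) subset_lessThan_if_colex_val_less by (meson order.strict_trans)
  moreover have "r + 1 \<notin> B"
  proof
    assume "r + 1 \<in> B"
    then have card_rest: "card (B - {r + 1}) = r - 1" using assms(1,2) by simp
    have "colex_val B = 2 ^ (r + 1) + colex_val (B - {r + 1})"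
      using colex_val_insert[of "B - {r + 1}" "r + 1"] assms(1) \<open>r + 1 \<in> B\<close> by (simp add: insert_absorb)
    moreover have "colex_val (insert (r + 1) {..<r - 1}) = 2 ^ (r + 1) + colex_val {..<r - 1}"
      by (rule colex_val_insert) auto
    ultimately have "colex_val (B - {r + 1}) + 1 < 2 ^ (r - 1)"
      using less colex_val_lessThan[of "r - 1"] by linarith
    then show False
      using two_power_card_le_colex_val[of "B - {r + 1}"] assms(1) card_rest by simp
  qed
  ultimately show ?thesis by (force simp: less_Suc_eq)
qed

lemma card_r_subsets_atMost: "card {B. B \<subseteq> {..r} \<and> card B = r} = Suc r"
  using n_subsets[of "{..r}" r] by simp

lemma insert_lessThan_mem_colex_family:
  assumes "r \<ge> 1" and "r + 2 \<le> s"
  shows "insert (r + 1) {..<r - 1} \<in> colex_family s r"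
proof -
  have "{B. finite B \<and> card B = r \<and> colex_less B (insert (r + 1) {..<r - 1})}
      \<subseteq> {B. B \<subseteq> {..r} \<and> card B = r}"
    unfolding colex_less_def using subset_atMost_if_colex_val_less_insert by blast
  then have "card {B. finite B \<and> card B = r \<and> colex_less B (insert (r + 1) {..<r - 1})} \<le> Suc r"
    using card_mono[of "{B. B \<subseteq> {..r} \<and> card B = r}"] card_r_subsets_atMost by fastforce
  then show ?thesis unfolding colex_family_def using assms by simp
qed

lemma atLeastAtMost_mem_colex_family:
  assumes "r \<ge> 1" and "r + 2 \<le> s"
  shows "{1..r} \<in> colex_family s r"
proof -
  have "colex_val {1..r} < 2 ^ (r + 1)"
    by (rule colex_val_less_if_subset_lessThan) auto
  also have "\<dots> \<le> colex_val (insert (r + 1) {..<r - 1})"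
    by (simp add: colex_val_insert)
  finally have "{B. finite B \<and> card B = r \<and> colex_less B {1..r}}
      \<subseteq> {B. B \<subseteq> {..r} \<and> card B = r} - {{1..r}}"
    unfolding colex_less_def using subset_atMost_if_colex_val_less_insert by fastforce
  then have "card {B. finite B \<and> card B = r \<and> colex_less B {1..r}} \<le> r"
    using card_mono[of "{B. B \<subseteq> {..r} \<and> card B = r} - {{1..r}}"] card_r_subsets_atMost
    by (fastforce simp: card_Diff_singleton)
  then show ?thesis unfolding colex_family_def using assms by simp
qed

lemma lex_predecessors_of_petal:
  assumes "r \<le> j"
  shows "{B. B \<subseteq> {1..t} \<and> card B = r \<and> lex_less B (insert j {1..<r})}
           \<subseteq> (\<lambda>i. insert i {1..<r}) ` {r..<j}"
proof
  let ?K = "{1..<r}" and ?A = "insert j {1..<r}"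
  fix B assume "B \<in> {B. B \<subseteq> {1..t} \<and> card B = r \<and> lex_less B ?A}"
  then have B: "B \<subseteq> {1..t}" "card B = r" "B \<noteq> ?A" "Min (B - ?A \<union> (?A - B)) \<in> B"
    unfolding lex_less_def by auto
  define D where "D = B - ?A \<union> (?A - B)"
  define m where "m = Min D"
  have "finite B" using B(1) finite_subset by blast
  then have "finite D" unfolding D_def by simp
  have "D \<noteq> {}" using B(3) unfolding D_def by blast
  then have "m \<in> D" and m_le: "\<And>x. x \<in> D \<Longrightarrow> m \<le> x"
    using \<open>finite D\<close> unfolding m_def by auto
  have "m \<in> B" "m \<notin> ?A" using B(4) \<open>m \<in> D\<close> unfolding m_def D_def by auto
  then have "r \<le> m" using B(1) by force
  have "?K \<subseteq> B"
  proof
    fix k assume "k \<in> ?K"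
    with \<open>r \<le> m\<close> have "\<not> m \<le> k" by simp
    then show "k \<in> B" using m_le[of k] \<open>k \<in> ?K\<close> unfolding D_def by blast
  qed
  have "0 < r" using \<open>m \<in> B\<close> \<open>finite B\<close> B(2) card_gt_0_iff by blast
  then have "card (insert m ?K) = r" using \<open>r \<le> m\<close> by simp
  then have "insert m ?K = B"
    using \<open>?K \<subseteq> B\<close> \<open>m \<in> B\<close> \<open>finite B\<close> B(2) by (intro card_subset_eq) auto
  then have "j \<notin> B" using \<open>m \<notin> ?A\<close> assms by auto
  then have "m < j" using m_le[of j] \<open>m \<notin> ?A\<close> unfolding D_def by fastforce
  then show "B \<in> (\<lambda>i. insert i ?K) ` {r..<j}"
    using \<open>insert m ?K = B\<close> \<open>r \<le> m\<close> by auto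
qed

lemma petal_mem_lex_family:
  assumes "r \<ge> 1" and "r \<le> j" "j < r + s" and "s + r \<le> t + 1"
  shows "insert j {1..<r} \<in> lex_family s r t"
proof -
  have "card {B. B \<subseteq> {1..t} \<and> card B = r \<and> lex_less B (insert j {1..<r})}
          \<le> card ((\<lambda>i. insert i {1..<r}) ` {r..<j})"
    using lex_predecessors_of_petal[OF assms(2)] by (intro card_mono) auto
  also have "\<dots> \<le> card {r..<j}" by (rule card_image_le) simp
  also have "\<dots> < s" using assms(2,3) by simp
  finally have "card {B. B \<subseteq> {1..t} \<and> card B = r \<and> lex_less B (insert j {1..<r})} < s" .
  moreover have "insert j {1..<r} \<subseteq> {1..t}" "card (insert j {1..<r}) = r"
    using assms by auto
  ultimately show ?thesis unfolding lex_family_def by simp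
qed

lemma P2_lex_family_ge:
  assumes "r \<ge> 1" and "s + r \<le> t + 1"
  shows "s\<^sup>2 * (r - 1) + s \<le> P2 (lex_family s r t)"
proof -
  have "lex_family s r t \<subseteq> Pow {1..t}" unfolding lex_family_def by auto
  then have fin: "finite (lex_family s r t)" "\<And>A. A \<in> lex_family s r t \<Longrightarrow> finite A"
    by (auto intro: finite_subset)
  have "(\<lambda>j. insert j {1..<r}) ` {r..<r + s} \<subseteq> lex_family s r t"
    using petal_mem_lex_family assms by auto
  then have "P2 ((\<lambda>j. insert j {1..<r}) ` {r..<r + s}) \<le> P2 (lex_family s r t)"
    using fin by (rule P2_mono)
  moreover have "P2 ((\<lambda>j. insert j {1..<r}) ` {r..<r + s}) = s\<^sup>2 * (r - 1) + s"
    using assms(1) by (subst P2_sunflower) auto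
  ultimately show ?thesis by simp
qed

lemma P2_colex_family_le:
  assumes "r \<ge> 2" and "r + 2 \<le> s"
  shows "P2 (colex_family s r) + 2 \<le> s\<^sup>2 * (r - 1) + s"
proof -
  have "{1..r} \<inter> insert (r + 1) {..<r - 1} = {1..<r - 1}" using assms(1) by auto
  then have "card ({1..r} \<inter> insert (r + 1) {..<r - 1}) + 2 \<le> r" using assms(1) by simp
  moreover have "{1..r} \<noteq> insert (r + 1) {..<r - 1}"
    using atLeastAtMost_iff[of "r + 1" 1 r] by fastforce
  moreover have "{1..r} \<in> colex_family s r" "insert (r + 1) {..<r - 1} \<in> colex_family s r"
    using assms atLeastAtMost_mem_colex_family insert_lessThan_mem_colex_family by simp_all
  moreover have "\<And>A. A \<in> colex_family s r \<Longrightarrow> finite A \<and> card A = r"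
    unfolding colex_family_def by simp
  ultimately have "P2 (colex_family s r) + 2 \<le> (card (colex_family s r))\<^sup>2 * (r - 1) + card (colex_family s r)"
    using finite_colex_family P2_uniform_le by metis
  also have "\<dots> \<le> s\<^sup>2 * (r - 1) + s"
    using card_colex_family_le by (intro add_mono mult_right_mono power_mono) auto
  finally show ?thesis .
qed

lemma real_le_one_minus_inverse_mult:
  fixes P L r s :: nat
  assumes "r \<ge> 1" "s \<ge> 1" and "P + 2 \<le> s\<^sup>2 * (r - 1) + s" and "s\<^sup>2 * (r - 1) + s \<le> L"
  shows "real P \<le> (1 - 1 / (real r * real s ^ 2)) * real L"
proof -
  define N where "N = real s ^ 2 * (real r - 1) + real s"
  have N_eq: "real (s\<^sup>2 * (r - 1) + s) = N" using assms(1) by (simp add: N_def of_nat_diff)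
  have "real (P + 2) \<le> N" "N \<le> real L"
    using assms(3,4) unfolding N_eq[symmetric] by (simp_all only: of_nat_le_iff)
  then have N: "real P + 2 \<le> N" "N \<le> real L" by simp_all
  have "1 \<le> real r * real s" using mult_mono[of 1 "real r" 1 "real s"] assms(1,2) by simp
  then have rs: "real s \<le> real r * real s ^ 2" "1 \<le> real s"
    using mult_left_mono[of 1 "real r * real s" "real s"] assms(2) by (simp_all add: power2_eq_square ac_simps)
  then have "real s \<le> real s ^ 2 + real r * real s ^ 2"
    using zero_le_power2[of "real s"] by linarith
  then have "N \<le> 2 * (real r * real s ^ 2)" unfolding N_def by (simp add: algebra_simps)
  then have "N / (real r * real s ^ 2) \<le> 2" using rs by (simp add: field_simps)
  then have "real P \<le> (1 - 1 / (real r * real s ^ 2)) * N" using N(1) by (simp add: algebra_simps)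
  also have "\<dots> \<le> (1 - 1 / (real r * real s ^ 2)) * real L"
    using N(2) rs by (intro mult_left_mono) (auto simp: field_simps)
  finally show ?thesis .
qed

theorem proposition6p4:
  fixes r s t :: nat
  assumes "r \<ge> 2" and "r + 2 \<le> s" and "s + r \<le> t + 1"
  shows "real (P2 (colex_family s r))
           \<le> (1 - 1 / (real r * real s ^ 2)) * real (P2 (lex_family s r t))"
proof (rule real_le_one_minus_inverse_mult)
  show "r \<ge> 1" "s \<ge> 1" using assms(1,2) by simp_all
  show "P2 (colex_family s r) + 2 \<le> s\<^sup>2 * (r - 1) + s"
    using assms(1,2) by (rule P2_colex_family_le)
  show "s\<^sup>2 * (r - 1) + s \<le> P2 (lex_family s r t)"
    using \<open>r \<ge> 1\<close> assms(3) by (rule P2_lex_family_ge)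
qed

end
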